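(* Let $\alpha\in(1,\infty)$ and suppose $g$ satisfies Assumption 1 with this $\alpha$ and with a supergradient $g'(x^* )>0$, and also satisfies Assumption 2 with the same $\alpha$. Then in the asymptotic regime there exist constants $0<K_1\le K_2$ and $c_0$ independent of $c$ such that for all $c\ge c_0$ there is a two-price policy $\mathbf x^{\mathrm{TP}}$ with $$K_1c^{1/(\alpha+1)}\le\lambda g(x^* )-\sup_{\mathbf x\in[0,1]^c}\mathcal R(\mathbf x)\le\lambda g(x^* )-\mathcal R(\mathbf x^{\mathrm{TP}})\le K_2\,c^{1/(\alpha+1)}(\log c)^2,$$ i.e. the optimal performance loss $\tilde\Theta(c^{1/(\alpha+1)})$ among stock-dependent policies is attained (up to logarithmic factors) by a two-price policy.
   Context: Setting. Fix $c\in\mathbb N$ (number of identical units of a single reusable resource), an arrival rate $\lambda>0$ and a mean usage duration $d>0$, with $x^*:=c/(\lambda d)\in(0,1)$. Let $g:[0,1]\to\mathbb R$ be concave, non-decreasing, with $g(0)=0$ (the reward function). A stock-dependent policy is a vector $\mathbf x=(x_1,\dots,x_c)\in[0,1]^c$, where $x_j$ is the admission probability used when exactly $j$ units are available (the admission probability is $0$ when no unit is available). Its steady-state distribution is the unique probability vector $\pi=(\pi_0,\dots,\pi_c)$ satisfying $\pi_j\lambda x_j=\pi_{j-1}(c-j+1)/d$ for all $j\in\{1,\dots,c\}$, and its long-run average reward is $\mathcal R(\mathbf x)=\sum_{j=1}^c\pi_j\lambda g(x_j)$. A two-price policy with parameters $x_L,x_H\in[0,1]$ and $\tau\in\{1,\dots,c\}$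 sets $x_j=x_L$ for $1\le j\le\tau$ and $x_j=x_H$ for $\tau<j\le c$. Asymptotic regime: $x^*\in(0,1)$, $d$ and $g$ are fixed, $c\to\infty$ and $\lambda=c/(x^*d)$. Assumption 1: there exist $0<\varepsilon<\min\{x^*,1-x^*\}$, $\alpha\in[1,\infty]$, $k_1\ge0$ and a supergradient $g'(x^* )\ge0$ of $g$ at $x^*$ such that $g(x)\ge g(x^* )+g'(x^* )(x-x^* )-k_1|x-x^*|^\alpha$ for all $x\in[x^*-\varepsilon,x^*+\varepsilon]$. Assumption 2: there exist $0<\varepsilon<\min\{x^*,1-x^*\}$, $\alpha\in[1,\infty]$, $k_2>0$ and a supergradient $g'(x^* )\ge0$ of $g$ at $x^*$ such that $g(x)\le g(x^* )+g'(x^* )(x-x^* )-k_2|x-x^*|^\alpha$ for all $x\in[x^*-\varepsilon,x^*+\varepsilon]$. *)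

theory Defs
  imports "HOL-Analysis.Analysis"
begin

text \<open>A stock-dependent policy for c units: x j is the admission probability
  when exactly j units are available, j = 1..c (values outside 1..c are irrelevant).\<close>
definition policy :: "nat \<Rightarrow> (nat \<Rightarrow> real) \<Rightarrow> bool" where
  "policy c x \<longleftrightarrow> (\<forall>j\<in>{1..c}. 0 \<le> x j \<and> x j \<le> 1)"

definition is_steady_state :: "nat \<Rightarrow> real \<Rightarrow> real \<Rightarrow> (nat \<Rightarrow> real) \<Rightarrow> (nat \<Rightarrow> real) \<Rightarrow> bool" where
  "is_steady_state c lam d x p \<longleftrightarrow>
     (\<forall>j\<le>c. 0 \<le> p j) \<and> (\<Sum>j\<le>c. p j) = 1 \<and> (\<forall>j>c. p j = 0) \<and>
     (\<forall>j\<in>{1..c}. p j * lam * x j = p (j - 1) * (real c - real j + 1) / d)"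

definition steady_state :: "nat \<Rightarrow> real \<Rightarrow> real \<Rightarrow> (nat \<Rightarrow> real) \<Rightarrow> (nat \<Rightarrow> real)" where
  "steady_state c lam d x = (THE p. is_steady_state c lam d x p)"

definition avg_reward :: "nat \<Rightarrow> real \<Rightarrow> real \<Rightarrow> (real \<Rightarrow> real) \<Rightarrow> (nat \<Rightarrow> real) \<Rightarrow> real" where
  "avg_reward c lam d g x = (\<Sum>j=1..c. steady_state c lam d x j * lam * g (x j))"

definition two_price_policy :: "nat \<Rightarrow> (nat \<Rightarrow> real) \<Rightarrow> bool" where
  "two_price_policy c x \<longleftrightarrow>
     (\<exists>xL xH \<tau>. 0 \<le> xL \<and> xL \<le> 1 \<and> 0 \<le> xH \<and> xH \<le> 1 \<and> \<tau> \<in> {1..c} \<and>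
        (\<forall>j\<in>{1..c}. x j = (if j \<le> \<tau> then xL else xH)))"

definition supergradient :: "(real \<Rightarrow> real) \<Rightarrow> real \<Rightarrow> real \<Rightarrow> bool" where
  "supergradient g x0 s \<longleftrightarrow> (\<forall>y\<in>{0..1}. g y \<le> g x0 + s * (y - x0))"

definition assumption1 :: "(real \<Rightarrow> real) \<Rightarrow> real \<Rightarrow> real \<Rightarrow> real \<Rightarrow> bool" where
  "assumption1 g xs \<alpha> s \<longleftrightarrow> supergradient g xs s \<and> 0 \<le> s \<and>
     (\<exists>\<epsilon> k1. 0 < \<epsilon> \<and> \<epsilon> < min xs (1 - xs) \<and> 0 \<le> k1 \<and>
        (\<forall>x\<in>{xs - \<epsilon>..xs + \<epsilon>}. g x \<ge> g xs + s * (x - xs) - k1 * \<bar>x - xs\<bar> powr \<alpha>))"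

definition assumption2 :: "(real \<Rightarrow> real) \<Rightarrow> real \<Rightarrow> real \<Rightarrow> real \<Rightarrow> bool" where
  "assumption2 g xs \<alpha> s \<longleftrightarrow> supergradient g xs s \<and> 0 \<le> s \<and>
     (\<exists>\<epsilon> k2. 0 < \<epsilon> \<and> \<epsilon> < min xs (1 - xs) \<and> 0 < k2 \<and>
        (\<forall>x\<in>{xs - \<epsilon>..xs + \<epsilon>}. g x \<le> g xs + s * (x - xs) - k2 * \<bar>x - xs\<bar> powr \<alpha>))"

end

theory Submission
  imports Defs "HOL-Real_Asymp.Real_Asymp"
begin

text \<open>With s the slope of g at xs, the loss lam g xs - R(x) of any policy is the sum of
  three nonnegative terms: lam p0 (g xs - s xs) for stock-outs, (s / d) E[stock] for idle
  units, and lam E[g xs + s (x_j - xs) - g x_j] for the curvature of g.  Put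
  T = c^(1/(alpha+1)).  A policy whose mean stock is below T must, by the flow balance, let
  its admission probabilities deviate from xs by about 1 / T on average; with curvature of
  order alpha this costs lam T^(-alpha), which is of order T.  Conversely, the two-price
  policy with prices xs -+ 1 / T and threshold about 2 xs T log c has stock-out probability
  at most 1 / c and mean stock at most the threshold plus xs T, so all three terms are
  O(T (log c)^2).\<close>

section \<open>Existence and uniqueness of the steady state\<close>

lemma last_zero_index:
  fixes a :: "nat \<Rightarrow> real"
  obtains m where "m \<le> c" "1 \<le> m \<Longrightarrow> a m = 0" "\<And>j. m < j \<Longrightarrow> j \<le> c \<Longrightarrow> a j \<noteq> 0"
proof -
  define Z where "Z = insert 0 {j\<in>{1..c}. a j = 0}"
  have fin: "finite Z" and ne: "Z \<noteq> {}" by (simp_all add: Z_def)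
  have "Max Z \<in> Z" by (rule Max_in[OF fin ne])
  then have "Max Z \<le> c" "1 \<le> Max Z \<longrightarrow> a (Max Z) = 0" by (auto simp: Z_def)
  moreover have "a j \<noteq> 0" if "Max Z < j" "j \<le> c" for j
  proof
    assume "a j = 0"
    then have "j \<in> Z" using that by (simp add: Z_def)
    then show False using Max_ge[OF fin] that by fastforce
  qed
  ultimately show ?thesis using that by blast
qed

lemma balance_recurrence_solution:
  fixes a b q :: "nat \<Rightarrow> real"
  assumes rec: "\<And>j. j \<in> {1..c} \<Longrightarrow> q j * a j = q (j - 1) * b j"
    and b: "\<And>j. j \<in> {1..c} \<Longrightarrow> 0 < b j"
    and m: "m \<le> c" "1 \<le> m \<Longrightarrow> a m = 0" "\<And>j. m < j \<Longrightarrow> j \<le> c \<Longrightarrow> a j \<noteq> 0"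
  shows balance_recurrence_below: "j < m \<Longrightarrow> q j = 0"
    and balance_recurrence_above: "m \<le> j \<Longrightarrow> j \<le> c \<Longrightarrow> q j = q m * (\<Prod>i\<in>{Suc m..j}. b i / a i)"
proof -
  assume "j < m"
  then have "j \<le> m - 1" by simp
  then show "q j = 0"
  proof (induction j rule: inc_induct)
    case base
    show ?case using rec[of m] b[of m] m \<open>j < m\<close> by auto
  next
    case (step n)
    then have "Suc n \<in> {1..c}" using m(1) by simp
    then show ?case using rec[of "Suc n"] b[of "Suc n"] step by auto
  qed
next
  assume "m \<le> j" "j \<le> c"
  then show "q j = q m * (\<Prod>i\<in>{Suc m..j}. b i / a i)"
  proof (induction j rule: dec_induct)
    case (step n)
    have "q (Suc n) = q n * (b (Suc n) / a (Suc n))"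
      using rec[of "Suc n"] m(3)[of "Suc n"] step by (auto simp: field_simps)
    then show ?case using step by (simp add: prod.nat_ivl_Suc')
  qed simp
qed

definition stock_weight :: "nat \<Rightarrow> real \<Rightarrow> real \<Rightarrow> (nat \<Rightarrow> real) \<Rightarrow> nat \<Rightarrow> nat \<Rightarrow> real" where
  "stock_weight c lam d x m j =
     (if m \<le> j \<and> j \<le> c then \<Prod>i\<in>{Suc m..j}. ((real c - real i + 1) / d) / (lam * x i) else 0)"

lemma is_steady_state_eq_stock_weight:
  assumes d: "0 < d" and p: "is_steady_state c lam d x p"
    and m: "m \<le> c" "1 \<le> m \<Longrightarrow> lam * x m = 0" "\<And>j. m < j \<Longrightarrow> j \<le> c \<Longrightarrow> lam * x j \<noteq> 0"
  shows "p j = p m * stock_weight c lam d x m j"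
proof -
  have rec: "p j * (lam * x j) = p (j - 1) * ((real c - real j + 1) / d)" if "j \<in> {1..c}" for j
    using p that unfolding is_steady_state_def by (simp add: mult.assoc)
  have b: "0 < (real c - real j + 1) / d" if "j \<in> {1..c}" for j
    using d that by simp
  consider "j < m" | "m \<le> j" "j \<le> c" | "c < j" by linarith
  then show ?thesis
  proof cases
    case 1
    then show ?thesis using balance_recurrence_below[OF rec b m, of j] by (simp add: stock_weight_def)
  next
    case 2
    then show ?thesis using balance_recurrence_above[OF rec b m, of j] by (simp add: stock_weight_def)
  next
    case 3
    then show ?thesis using p by (simp add: is_steady_state_def stock_weight_def)
  qed
qed

lemma steady_state_unique:
  assumes d: "0 < d" and p: "is_steady_state c lam d x p" and q: "is_steady_state c lam d x q"
  shows "p = q"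
proof -
  obtain m where m: "m \<le> c" "1 \<le> m \<Longrightarrow> lam * x m = 0" "\<And>j. m < j \<Longrightarrow> j \<le> c \<Longrightarrow> lam * x j \<noteq> 0"
    using last_zero_index[of c "\<lambda>j. lam * x j"] by metis
  define w where "w = stock_weight c lam d x m"
  have weight: "r j = r m * w j" if "is_steady_state c lam d x r" for r j
    unfolding w_def by (rule is_steady_state_eq_stock_weight[OF d that m])
  have norm: "r m * (\<Sum>j\<le>c. w j) = 1" if r: "is_steady_state c lam d x r" for r
  proof -
    have "r m * (\<Sum>j\<le>c. w j) = (\<Sum>j\<le>c. r j)"
      unfolding sum_distrib_left by (rule sum.cong[OF refl]) (rule weight[OF r, symmetric])
    also have "\<dots> = 1" using r by (simp add: is_steady_state_def)
    finally show ?thesis .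
  qed
  have "(\<Sum>j\<le>c. w j) \<noteq> 0" using norm[OF p] by (metis mult_zero_right zero_neq_one)
  moreover have "p m * (\<Sum>j\<le>c. w j) = q m * (\<Sum>j\<le>c. w j)" using norm[OF p] norm[OF q] by simp
  ultimately have "p m = q m" by simp
  show ?thesis
  proof
    fix j
    have "p j = p m * w j" by (rule weight[OF p])
    also have "\<dots> = q m * w j" by (simp only: \<open>p m = q m\<close>)
    also have "\<dots> = q j" by (rule weight[OF q, symmetric])
    finally show "p j = q j" .
  qed
qed

lemma stock_weight_nonneg:
  assumes "0 < lam" "0 < d" and pos: "\<And>j. m < j \<Longrightarrow> j \<le> c \<Longrightarrow> 0 < x j"
  shows "0 \<le> stock_weight c lam d x m j"
proof (cases "m \<le> j \<and> j \<le> c")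
  case True
  have "0 < (real c - real i + 1) / d / (lam * x i)" if "i \<in> {Suc m..j}" for i
    using that True assms pos[of i] by simp
  then have "0 \<le> (\<Prod>i\<in>{Suc m..j}. (real c - real i + 1) / d / (lam * x i))"
    by (intro prod_nonneg) (simp add: less_imp_le)
  then show ?thesis using True by (simp add: stock_weight_def)
qed (auto simp: stock_weight_def)

lemma stock_weight_balance:
  assumes lam: "0 < lam" and d: "0 < d" and j: "j \<in> {1..c}"
    and m: "1 \<le> m \<Longrightarrow> x m = 0" "\<And>j. m < j \<Longrightarrow> j \<le> c \<Longrightarrow> 0 < x j"
  shows "stock_weight c lam d x m j * lam * x j
    = stock_weight c lam d x m (j - 1) * (real c - real j + 1) / d"
proof -
  consider "j < m" | "j = m" | "m < j" by linarith
  then show ?thesis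
  proof cases
    case 3
    then have "stock_weight c lam d x m j
        = stock_weight c lam d x m (j - 1) * (((real c - real j + 1) / d) / (lam * x j))"
      using j by (cases j) (auto simp: stock_weight_def prod.nat_ivl_Suc')
    moreover have "0 < x j" using m(2) 3 j by simp
    ultimately show ?thesis using lam d by (simp add: field_simps)
  qed (use m j in \<open>auto simp: stock_weight_def\<close>)
qed

lemma steady_state_exists:
  assumes lam: "0 < lam" and d: "0 < d" and x: "policy c x"
  shows "\<exists>p. is_steady_state c lam d x p"
proof -
  obtain m where m: "m \<le> c" "1 \<le> m \<Longrightarrow> x m = 0" "\<And>j. m < j \<Longrightarrow> j \<le> c \<Longrightarrow> x j \<noteq> 0"
    using last_zero_index[of c x] by metis
  have pos: "0 < x j" if "m < j" "j \<le> c" for j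
  proof -
    have "0 \<le> x j" using x that unfolding policy_def by simp
    then show ?thesis using m(3)[OF that] by simp
  qed
  define w where "w = stock_weight c lam d x m"
  have w: "0 \<le> w j" for j unfolding w_def by (rule stock_weight_nonneg[OF lam d pos])
  define S where "S = (\<Sum>j\<le>c. w j)"
  have "w m = 1" using m by (simp add: w_def stock_weight_def)
  then have S: "1 \<le> S" unfolding S_def using m w by (metis atMost_iff finite_atMost member_le_sum)
  have "is_steady_state c lam d x (\<lambda>j. w j / S)"
    unfolding is_steady_state_def
  proof (intro conjI allI impI ballI)
    show "(\<Sum>j\<le>c. w j / S) = 1" using S by (simp add: S_def flip: sum_divide_distrib)
    show "w j / S * lam * x j = w (j - 1) / S * (real c - real j + 1) / d" if "j \<in> {1..c}" for j
      using stock_weight_balance[of lam d j c m x] lam d that m(2) pos by (simp add: w_def)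
    show "0 \<le> w j / S" for j using w[of j] S by simp
    show "w j / S = 0" if "c < j" for j using that by (simp add: w_def stock_weight_def)
  qed
  then show ?thesis by blast
qed

lemma is_steady_state_steady_state:
  assumes "0 < lam" "0 < d" "policy c x"
  shows "is_steady_state c lam d x (steady_state c lam d x)"
proof -
  have "\<exists>!p. is_steady_state c lam d x p"
    using steady_state_exists[OF assms] steady_state_unique[OF assms(2)] by blast
  then show ?thesis unfolding steady_state_def by (rule theI')
qed

section \<open>The reward function near xs\<close>

lemma concave_linearization_gap_growth:
  fixes g :: "real \<Rightarrow> real"
  assumes conc: "concave_on {0..1} g" and eps: "0 < \<epsilon>" "\<epsilon> < min xs (1 - xs)" and k: "0 < k"
    and local: "\<forall>y\<in>{xs - \<epsilon>..xs + \<epsilon>}. g y \<le> g xs + s * (y - xs) - k * \<bar>y - xs\<bar> powr \<alpha>"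
    and \<alpha>: "1 \<le> \<alpha>" and x: "x \<in> {0..1}"
  shows "k * \<epsilon> powr (\<alpha> - 1) * \<bar>x - xs\<bar> powr \<alpha> \<le> g xs + s * (x - xs) - g x"
proof (cases "\<bar>x - xs\<bar> \<le> \<epsilon>")
  case True
  have "\<epsilon> powr (\<alpha> - 1) \<le> 1" using eps \<alpha> by (intro powr_le1) auto
  then have "\<epsilon> powr (\<alpha> - 1) * \<bar>x - xs\<bar> powr \<alpha> \<le> \<bar>x - xs\<bar> powr \<alpha>"
    by (intro mult_left_le_one_le) auto
  then have "k * \<epsilon> powr (\<alpha> - 1) * \<bar>x - xs\<bar> powr \<alpha> \<le> k * \<bar>x - xs\<bar> powr \<alpha>"
    using k by (simp add: mult.assoc)
  also have "\<dots> \<le> g xs + s * (x - xs) - g x"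
  proof -
    have "x \<in> {xs - \<epsilon>..xs + \<epsilon>}" using True by (auto simp: abs_le_iff)
    then show ?thesis using local by fastforce
  qed
  finally show ?thesis .
next
  case False
  text \<open>Concavity transfers the bound from the point y at distance eps on the segment to x.\<close>
  define D where "D = \<bar>x - xs\<bar>"
  define t where "t = \<epsilon> / D"
  have D: "\<epsilon> < D" "D \<le> 1" using False x eps by (auto simp: D_def)
  have t: "0 < t" "t < 1" using D eps by (auto simp: t_def)
  define y where "y = (1 - t) * xs + t * x"
  have yxs: "y - xs = t * (x - xs)" by (simp add: y_def algebra_simps)
  have dist_y: "\<bar>y - xs\<bar> = \<epsilon>" using t D eps unfolding yxs D_def t_def by (simp add: abs_mult)
  have "(1 - t) * g xs + t * g x \<le> g y"
    using concave_onD[OF conc, of t xs x] t eps x by (simp add: y_def)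
  moreover have "g y \<le> g xs + s * (y - xs) - k * \<epsilon> powr \<alpha>"
  proof -
    have "y \<in> {xs - \<epsilon>..xs + \<epsilon>}" using dist_y by (auto simp: abs_le_iff)
    then show ?thesis using local dist_y by fastforce
  qed
  ultimately have "k * \<epsilon> powr \<alpha> \<le> t * (g xs + s * (x - xs) - g x)"
    unfolding yxs by (simp add: algebra_simps)
  moreover have "\<epsilon> powr \<alpha> = \<epsilon> powr (\<alpha> - 1) * \<epsilon>" using eps by (simp add: powr_diff)
  ultimately have "\<epsilon> * (k * \<epsilon> powr (\<alpha> - 1) * D) \<le> \<epsilon> * (g xs + s * (x - xs) - g x)"
    using D eps by (simp add: t_def field_simps)
  then have "k * \<epsilon> powr (\<alpha> - 1) * D \<le> g xs + s * (x - xs) - g x"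
    using eps by (simp add: mult_le_cancel_left_pos)
  moreover have "k * \<epsilon> powr (\<alpha> - 1) * D powr \<alpha> \<le> k * \<epsilon> powr (\<alpha> - 1) * D"
    using D eps \<alpha> k by (intro mult_left_mono powr_le_one_le) auto
  ultimately show ?thesis unfolding D_def by linarith
qed

text \<open>The local lower bound of order alpha > 1 makes g differentiable at xs.\<close>
lemma supergradient_eq_of_local_lower_bound:
  fixes g :: "real \<Rightarrow> real"
  assumes eps: "0 < \<epsilon>" "\<epsilon> < min xs (1 - xs)" and k: "0 \<le> k"
    and local: "\<forall>y\<in>{xs - \<epsilon>..xs + \<epsilon>}. g xs + s1 * (y - xs) - k * \<bar>y - xs\<bar> powr \<alpha> \<le> g y"
    and sg: "supergradient g xs s2" and \<alpha>: "1 < \<alpha>"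
  shows "s1 = s2"
proof (rule ccontr)
  assume ne: "s1 \<noteq> s2"
  define D where "D = \<bar>s1 - s2\<bar>"
  have D: "0 < D" using ne by (simp add: D_def)
  define t where "t = min \<epsilon> ((D / (2 * k + 1)) powr (1 / (\<alpha> - 1)))"
  have t: "0 < t" "t \<le> \<epsilon>" using eps D k by (simp_all add: t_def)
  have "t powr (\<alpha> - 1) \<le> ((D / (2 * k + 1)) powr (1 / (\<alpha> - 1))) powr (\<alpha> - 1)"
    using t \<alpha> by (intro powr_mono2) (auto simp: t_def)
  also have "\<dots> = D / (2 * k + 1)" using \<alpha> D k by (simp add: powr_powr)
  finally have t_pow: "t powr (\<alpha> - 1) \<le> D / (2 * k + 1)" .
  define y where "y = xs + sgn (s1 - s2) * t"
  have dist_y: "\<bar>y - xs\<bar> = t" using t ne by (simp add: y_def abs_mult)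
  have y: "y \<in> {xs - \<epsilon>..xs + \<epsilon>}" using dist_y t by (auto simp: abs_le_iff)
  then have "g xs + s1 * (y - xs) - k * t powr \<alpha> \<le> g y" using local dist_y by auto
  moreover have "g y \<le> g xs + s2 * (y - xs)" using sg y eps unfolding supergradient_def by auto
  ultimately have "D * t \<le> k * t powr \<alpha>"
    using ne by (simp add: y_def D_def algebra_simps sgn_if split: if_splits)
  also have "\<dots> = k * t powr (\<alpha> - 1) * t" using t by (simp add: powr_diff)
  finally have "D \<le> k * t powr (\<alpha> - 1)" using t by simp
  also have "\<dots> \<le> k * (D / (2 * k + 1))" using t_pow k by (rule mult_left_mono)
  finally have "D * (2 * k + 1) \<le> k * D" using k by (simp add: field_simps)
  then show False using D mult_nonneg_nonneg[OF k, of D] by (simp add: algebra_simps)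
qed

lemma weighted_powr_lower_bound:
  fixes w \<delta> :: "'a \<Rightarrow> real"
  assumes w: "\<And>i. i \<in> A \<Longrightarrow> 0 \<le> w i" "sum w A \<le> 1" and \<delta>: "\<And>i. i \<in> A \<Longrightarrow> 0 \<le> \<delta> i"
    and \<beta>: "0 < \<beta>" and \<alpha>: "1 \<le> \<alpha>" and mean: "2 * \<beta> \<le> (\<Sum>i\<in>A. w i * \<delta> i)"
  shows "\<beta> powr \<alpha> \<le> (\<Sum>i\<in>A. w i * \<delta> i powr \<alpha>)"
proof -
  define H where "H = (\<Sum>i\<in>A. w i * \<delta> i powr \<alpha>)"
  have split: "\<delta> i \<le> \<beta> + \<delta> i powr \<alpha> / \<beta> powr (\<alpha> - 1)" if "i \<in> A" for i
  proof (cases "\<delta> i \<le> \<beta>")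
    case True
    moreover have "0 \<le> \<delta> i powr \<alpha> / \<beta> powr (\<alpha> - 1)" by simp
    ultimately show ?thesis by linarith
  next
    case False
    then have "\<beta> powr (\<alpha> - 1) * \<delta> i \<le> \<delta> i powr (\<alpha> - 1) * \<delta> i"
      using \<beta> \<alpha> by (intro mult_right_mono powr_mono2) auto
    also have "\<dots> = \<delta> i powr \<alpha>" using False \<beta> by (simp add: powr_diff)
    finally have "\<delta> i \<le> \<delta> i powr \<alpha> / \<beta> powr (\<alpha> - 1)" using \<beta> by (simp add: field_simps)
    then show ?thesis using \<beta> by simp
  qed
  have "(\<Sum>i\<in>A. w i * \<delta> i) \<le> (\<Sum>i\<in>A. w i * (\<beta> + \<delta> i powr \<alpha> / \<beta> powr (\<alpha> - 1)))"
    using w split by (intro sum_mono mult_left_mono) auto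
  then have "2 * \<beta> \<le> (\<Sum>i\<in>A. w i * (\<beta> + \<delta> i powr \<alpha> / \<beta> powr (\<alpha> - 1)))"
    using mean by linarith
  also have "\<dots> = \<beta> * sum w A + H / \<beta> powr (\<alpha> - 1)"
    by (simp add: H_def algebra_simps sum.distrib sum_distrib_left sum_divide_distrib)
  also have "\<dots> \<le> \<beta> + H / \<beta> powr (\<alpha> - 1)" using w \<beta> by simp
  finally have "\<beta> * \<beta> powr (\<alpha> - 1) \<le> H" using \<beta> by (simp add: field_simps)
  then show ?thesis using \<beta> by (simp add: H_def powr_diff field_simps)
qed

lemma one_minus_power_le_exp:
  assumes "a \<le> 1"
  shows "(1 - a) ^ n \<le> exp (- (a * real n))"
proof -
  have "(1 - a) ^ n \<le> exp (- a) ^ n"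
    using assms by (intro power_mono) (auto simp: exp_ge_add_one_self[of "-a", simplified])
  then show ?thesis by (simp add: exp_of_nat_mult[symmetric] mult_ac)
qed

lemma supergradient_intercept_nonneg:
  assumes "supergradient g xs s" "g 0 = 0"
  shows "0 \<le> g xs - s * xs"
  using assms unfolding supergradient_def by (auto dest: bspec[of _ _ 0])

text \<open>Assumption 1 pins down the supergradient at xs, so both assumptions hold with the same
  slope s; Assumption 2 then extends to all of [0, 1] by concavity.\<close>
lemma reward_regularity:
  fixes g :: "real \<Rightarrow> real"
  assumes conc: "concave_on {0..1} g" and \<alpha>: "1 < \<alpha>"
    and A1: "\<exists>s. 0 < s \<and> assumption1 g xs \<alpha> s" and A2: "\<exists>s. assumption2 g xs \<alpha> s"
  obtains s \<epsilon> k1 k where "0 < s" "supergradient g xs s" "0 < \<epsilon>" "\<epsilon> < min xs (1 - xs)" "0 \<le> k1"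
    "\<forall>y\<in>{xs - \<epsilon>..xs + \<epsilon>}. g xs + s * (y - xs) - k1 * \<bar>y - xs\<bar> powr \<alpha> \<le> g y"
    "0 < k" "\<forall>y\<in>{0..1}. k * \<bar>y - xs\<bar> powr \<alpha> \<le> g xs + s * (y - xs) - g y"
proof -
  obtain s \<epsilon> k1 where s: "0 < s" "supergradient g xs s" and eps: "0 < \<epsilon>" "\<epsilon> < min xs (1 - xs)"
    and k1: "0 \<le> k1"
    and lower: "\<forall>y\<in>{xs - \<epsilon>..xs + \<epsilon>}. g xs + s * (y - xs) - k1 * \<bar>y - xs\<bar> powr \<alpha> \<le> g y"
    using A1 unfolding assumption1_def by blast
  obtain s2 \<epsilon>2 k2 where s2: "supergradient g xs s2" and eps2: "0 < \<epsilon>2" "\<epsilon>2 < min xs (1 - xs)"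
    and k2: "0 < k2"
    and upper: "\<forall>y\<in>{xs - \<epsilon>2..xs + \<epsilon>2}. g y \<le> g xs + s2 * (y - xs) - k2 * \<bar>y - xs\<bar> powr \<alpha>"
    using A2 unfolding assumption2_def by blast
  have "s2 = s" by (rule sym, rule supergradient_eq_of_local_lower_bound[OF eps k1 lower s2 \<alpha>])
  then have "\<forall>y\<in>{0..1}. k2 * \<epsilon>2 powr (\<alpha> - 1) * \<bar>y - xs\<bar> powr \<alpha> \<le> g xs + s * (y - xs) - g y"
    using \<alpha> upper by (intro ballI concave_linearization_gap_growth[OF conc eps2 k2]) auto
  moreover have "0 < k2 * \<epsilon>2 powr (\<alpha> - 1)" using k2 eps2 by simp
  ultimately show ?thesis using that s eps k1 lower by blast
qed

section \<open>Steady states under the fluid scaling\<close>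

lemma sum_atMost_eq_0_plus_atLeast1:
  fixes f :: "nat \<Rightarrow> 'a::comm_monoid_add"
  shows "(\<Sum>i\<le>c. f i) = f 0 + (\<Sum>j=1..c. f j)"
  by (simp add: sum.atMost_shift sum.atLeast1_atMost_eq)

lemma scaled_rate_mult_powr:
  assumes lam: "lam = real c / (xs * d)" and "0 < xs" "0 < d"
    and T: "0 < T" "real c = T powr (\<alpha> + 1)"
  shows "lam * (a / T) powr \<alpha> = a powr \<alpha> / (xs * d) * T"
proof -
  define P where "P = T powr \<alpha>"
  have "(a / T) powr \<alpha> = a powr \<alpha> / P" unfolding P_def by (rule powr_divide)
  moreover have "real c = P * T" "0 < P" unfolding P_def using T by (simp_all add: powr_add)
  ultimately show ?thesis unfolding lam using assms by (simp add: field_simps)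
qed

definition two_price :: "nat \<Rightarrow> real \<Rightarrow> real \<Rightarrow> nat \<Rightarrow> real" where
  "two_price \<tau> xL xH j = (if j \<le> \<tau> then xL else xH)"

lemma policy_two_price:
  "0 \<le> xL \<Longrightarrow> xL \<le> 1 \<Longrightarrow> 0 \<le> xH \<Longrightarrow> xH \<le> 1 \<Longrightarrow> policy c (two_price \<tau> xL xH)"
  by (simp add: policy_def two_price_def)

lemma two_price_policy_two_price:
  "0 \<le> xL \<Longrightarrow> xL \<le> 1 \<Longrightarrow> 0 \<le> xH \<Longrightarrow> xH \<le> 1 \<Longrightarrow> \<tau> \<in> {1..c}
    \<Longrightarrow> two_price_policy c (two_price \<tau> xL xH)"
  unfolding two_price_policy_def two_price_def by blast

text \<open>Under the scaling lam = c / (xs d) of the asymptotic regime, admitting with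
  probability xs keeps all c units busy in the fluid limit.\<close>
locale scaled_steady_state =
  fixes c :: nat and lam d xs :: real and x p :: "nat \<Rightarrow> real"
  assumes steady: "is_steady_state c lam d x p"
    and lam_eq: "lam = real c / (xs * d)"
    and xs_pos: "0 < xs" and d_pos: "0 < d"
begin

lemma p_nonneg: "j \<le> c \<Longrightarrow> 0 \<le> p j"
  using steady by (simp add: is_steady_state_def)

lemma sum_p: "(\<Sum>j\<le>c. p j) = 1"
  using steady by (simp add: is_steady_state_def)

lemma p_le_one: "j \<le> c \<Longrightarrow> p j \<le> 1"
  using member_le_sum[of j "{..c}" p] p_nonneg sum_p by simp

lemma sum_p_atLeast1: "(\<Sum>j=1..c. p j) = 1 - p 0"
  using sum_p sum_atMost_eq_0_plus_atLeast1[of p c] by simp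

lemma balance: "j \<in> {1..c} \<Longrightarrow> p j * real c * x j = xs * (p (j - 1) * (real c - real (j - 1)))"
  using steady xs_pos d_pos
  by (auto simp: is_steady_state_def lam_eq of_nat_diff field_simps)

lemma weighted_balance:
  "(\<Sum>j=1..c. p j * real c * x j * \<phi> (j - 1)) = xs * (\<Sum>i\<le>c. p i * (real c - real i) * \<phi> i)"
proof -
  have "(\<Sum>j=1..c. p j * real c * x j * \<phi> (j - 1))
      = (\<Sum>j=1..c. xs * (p (j - 1) * (real c - real (j - 1)) * \<phi> (j - 1)))"
    by (intro sum.cong refl) (simp add: balance)
  also have "\<dots> = (\<Sum>i<c. xs * (p i * (real c - real i) * \<phi> i))"
    by (simp add: sum.atLeast1_atMost_eq)
  also have "\<dots> = (\<Sum>i\<le>c. xs * (p i * (real c - real i) * \<phi> i))"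
    by (simp add: lessThan_Suc_atMost[symmetric])
  finally show ?thesis by (simp add: sum_distrib_left)
qed

text \<open>Little's law: the mean admission rate equals the mean departure rate of the
  c - (mean stock) units in use.\<close>
lemma flow: "lam * (\<Sum>j=1..c. p j * x j) = (real c - (\<Sum>i\<le>c. real i * p i)) / d"
proof -
  have "real c * (\<Sum>j=1..c. p j * x j) = xs * (\<Sum>i\<le>c. p i * (real c - real i))"
    using weighted_balance[of "\<lambda>_. 1"] by (simp add: sum_distrib_left mult_ac)
  also have "(\<Sum>i\<le>c. p i * (real c - real i)) = real c - (\<Sum>i\<le>c. real i * p i)"
    using sum_p by (simp add: algebra_simps sum_subtractf flip: sum_distrib_left)
  finally show ?thesis using xs_pos d_pos by (simp add: lam_eq field_simps)
qed

lemma loss_decomposition: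
  "lam * g xs - (\<Sum>j=1..c. p j * lam * g (x j)) =
     lam * p 0 * (g xs - s * xs) + s / d * (\<Sum>i\<le>c. real i * p i)
     + lam * (\<Sum>j=1..c. p j * (g xs + s * (x j - xs) - g (x j)))"
proof -
  define u where "u = (\<Sum>i\<le>c. real i * p i)"
  define P where "P = (\<Sum>j=1..c. p j * x j)"
  define G where "G = (\<Sum>j=1..c. p j * g (x j))"
  have gap: "(\<Sum>j=1..c. p j * (g xs + s * (x j - xs) - g (x j))) = (g xs - s * xs) * (1 - p 0) + s * P - G"
    unfolding P_def G_def
    by (simp add: algebra_simps sum.distrib sum_subtractf sum_distrib_left flip: sum_p_atLeast1)
  have reward: "(\<Sum>j=1..c. p j * lam * g (x j)) = lam * G"
    by (simp add: G_def sum_distrib_left mult_ac)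
  have flows: "lam * P = (real c - u) / d" "lam * xs = real c / d"
    using flow xs_pos by (simp_all add: P_def u_def lam_eq)
  have "lam * p 0 * (g xs - s * xs) + s / d * u + lam * ((g xs - s * xs) * (1 - p 0) + s * P - G)
      = lam * g xs - s * (lam * xs) + s / d * u + s * (lam * P) - lam * G"
    by (simp add: algebra_simps)
  also have "\<dots> = lam * g xs - lam * G"
    unfolding flows using d_pos by (simp add: field_simps)
  finally show ?thesis unfolding gap reward u_def[symmetric] by simp
qed

lemma weighted_flow_difference:
  "real c * xs * ((\<Sum>i\<le>c. p i * \<phi> i) - (\<Sum>j=1..c. p j * \<phi> (j - 1)))
     = xs * (\<Sum>i\<le>c. real i * p i * \<phi> i) - real c * (\<Sum>j=1..c. p j * (xs - x j) * \<phi> (j - 1))"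
proof -
  have "real c * xs * (\<Sum>j=1..c. p j * \<phi> (j - 1))
      = (\<Sum>j=1..c. p j * real c * x j * \<phi> (j - 1)) + real c * (\<Sum>j=1..c. p j * (xs - x j) * \<phi> (j - 1))"
    by (simp add: sum_distrib_left algebra_simps flip: sum.distrib)
  also have "(\<Sum>j=1..c. p j * real c * x j * \<phi> (j - 1))
      = real c * xs * (\<Sum>i\<le>c. p i * \<phi> i) - xs * (\<Sum>i\<le>c. real i * p i * \<phi> i)"
    unfolding weighted_balance by (simp add: sum_distrib_left algebra_simps sum_subtractf)
  finally show ?thesis by (simp add: algebra_simps)
qed

text \<open>Weighting the flow balance by min (j + 1) M shows that a small mean stock forces
  the admission probabilities to deviate from xs on average.\<close>
lemma mean_stock_deviation_tradeoff:
  assumes M: "1 \<le> M"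
  shows "real c * xs * (1 - (\<Sum>i\<le>c. real i * p i) / real M)
     \<le> xs * real M * (\<Sum>i\<le>c. real i * p i) + real c * real M * (\<Sum>j=1..c. p j * \<bar>xs - x j\<bar>)"
proof -
  define u where "u = (\<Sum>i\<le>c. real i * p i)"
  define \<phi> where "\<phi> i = real (min (i + 1) M)" for i
  have increment: "(\<Sum>i\<le>c. p i * \<phi> i) - (\<Sum>j=1..c. p j * \<phi> (j - 1)) = (\<Sum>i\<le>c. p i * (if i < M then 1 else 0))"
    using M by (simp add: sum_atMost_eq_0_plus_atLeast1 \<phi>_def algebra_simps
      flip: sum_subtractf sum.distrib cong: sum.cong) (auto intro!: sum.cong simp: min_def algebra_simps)
  have "1 - u / real M = (\<Sum>i\<le>c. p i * (1 - real i / real M))"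
    using sum_p by (simp add: u_def algebra_simps sum_subtractf sum_divide_distrib)
  also have "\<dots> \<le> (\<Sum>i\<le>c. p i * (if i < M then 1 else 0))"
    using M p_nonneg by (intro sum_mono mult_left_mono) auto
  finally have "real c * xs * (1 - u / real M) \<le> real c * xs * (\<Sum>i\<le>c. p i * (if i < M then 1 else 0))"
    using xs_pos by (intro mult_left_mono) auto
  also have "\<dots> = xs * (\<Sum>i\<le>c. real i * p i * \<phi> i) + real c * - (\<Sum>j=1..c. p j * (xs - x j) * \<phi> (j - 1))"
    unfolding increment[symmetric] weighted_flow_difference by simp
  also have "\<dots> \<le> xs * (\<Sum>i\<le>c. real i * p i * real M) + real c * (\<Sum>j=1..c. p j * \<bar>xs - x j\<bar> * real M)"
  proof (intro add_mono mult_left_mono)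
    show "(\<Sum>i\<le>c. real i * p i * \<phi> i) \<le> (\<Sum>i\<le>c. real i * p i * real M)"
      using p_nonneg by (intro sum_mono mult_left_mono) (auto simp: \<phi>_def)
    have "- ((xs - x j) * \<phi> (j - 1)) \<le> \<bar>xs - x j\<bar> * real M" for j
    proof -
      have "- ((xs - x j) * \<phi> (j - 1)) \<le> \<bar>xs - x j\<bar> * \<phi> (j - 1)"
        using mult_right_mono[OF abs_ge_minus_self[of "xs - x j"], of "\<phi> (j - 1)"] by (simp add: \<phi>_def algebra_simps)
      also have "\<dots> \<le> \<bar>xs - x j\<bar> * real M" by (intro mult_left_mono) (auto simp: \<phi>_def)
      finally show ?thesis .
    qed
    then have "p j * - ((xs - x j) * \<phi> (j - 1)) \<le> p j * (\<bar>xs - x j\<bar> * real M)" if "j \<le> c" for j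
      using p_nonneg[OF that] by (rule mult_left_mono)
    then show "- (\<Sum>j=1..c. p j * (xs - x j) * \<phi> (j - 1)) \<le> (\<Sum>j=1..c. p j * \<bar>xs - x j\<bar> * real M)"
      unfolding sum_negf[symmetric] by (intro sum_mono) (simp add: mult.assoc)
  qed (use xs_pos in auto)
  finally show ?thesis by (simp add: u_def sum_distrib_left sum_distrib_right mult_ac)
qed

text \<open>Admitting with probability xs + eta above the threshold tau makes the stock drift
  down there, so the excess of the stock over tau has mean at most xs / eta.\<close>
lemma mean_stock_le_threshold:
  assumes eta: "0 < \<eta>" and above: "\<And>j. \<tau> < j \<Longrightarrow> j \<le> c \<Longrightarrow> x j = xs + \<eta>"
  shows "(\<Sum>i\<le>c. real i * p i) \<le> real \<tau> + xs / \<eta>"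
proof -
  define e where "e i = max (real i - real \<tau>) 0" for i
  define E where "E = (\<Sum>i\<le>c. e i * p i)"
  have step: "(xs + \<eta>) * (e j * p j) \<le> xs * ((e (j - 1) + 1) * p (j - 1))" if j: "j \<in> {1..c}" for j
  proof (cases "j \<le> \<tau>")
    case True
    moreover have "0 \<le> p (j - 1)" using j by (intro p_nonneg) auto
    ultimately show ?thesis using xs_pos by (simp add: e_def)
  next
    case False
    have "p j * real c * (xs + \<eta>) = xs * (p (j - 1) * (real c - real (j - 1)))"
      using balance[OF j] above[of j] False j by simp
    also have "\<dots> \<le> xs * (p (j - 1) * real c)"
      using xs_pos p_nonneg[of "j - 1"] j by (intro mult_left_mono) auto
    finally have drop: "p j * (xs + \<eta>) \<le> xs * p (j - 1)" using j by (simp add: mult_ac)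
    have "(xs + \<eta>) * (e j * p j) = e j * (p j * (xs + \<eta>))" by (simp add: mult_ac)
    also have "\<dots> \<le> e j * (xs * p (j - 1))" by (rule mult_left_mono[OF drop]) (simp add: e_def)
    also have "\<dots> = xs * ((e (j - 1) + 1) * p (j - 1))"
      using False j by (auto simp: e_def of_nat_diff)
    finally show ?thesis .
  qed
  have "(xs + \<eta>) * E = (\<Sum>j=1..c. (xs + \<eta>) * (e j * p j))"
    by (simp add: E_def sum_distrib_left sum_atMost_eq_0_plus_atLeast1 e_def)
  also have "\<dots> \<le> (\<Sum>j=1..c. xs * ((e (j - 1) + 1) * p (j - 1)))"
    by (intro sum_mono step)
  also have "\<dots> = (\<Sum>i<c. xs * ((e i + 1) * p i))" by (simp add: sum.atLeast1_atMost_eq)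
  also have "\<dots> \<le> (\<Sum>i\<le>c. xs * ((e i + 1) * p i))"
    using xs_pos p_nonneg by (intro sum_mono2) (auto simp: e_def)
  also have "\<dots> = xs * (E + 1)"
    using sum_p by (simp add: E_def distrib_right sum.distrib flip: sum_distrib_left)
  finally have "E \<le> xs / \<eta>" using eta by (simp add: field_simps)
  moreover have "(\<Sum>i\<le>c. real i * p i) \<le> (\<Sum>i\<le>c. (real \<tau> + e i) * p i)"
    using p_nonneg by (intro sum_mono mult_right_mono) (auto simp: e_def)
  moreover have "(\<Sum>i\<le>c. (real \<tau> + e i) * p i) = real \<tau> + E"
    using sum_p by (simp add: E_def distrib_right sum.distrib flip: sum_distrib_left)
  ultimately show ?thesis by linarith
qed

text \<open>Below the threshold tau the stock drifts up at rate at least c eta / 2, so the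
  probability of an empty stock decays geometrically in tau.\<close>
lemma empty_probability_le_power:
  assumes eta: "0 < \<eta>" "\<eta> < xs" and tau: "\<tau> \<le> c"
    and below: "\<And>j. 1 \<le> j \<Longrightarrow> j \<le> \<tau> \<Longrightarrow> x j = xs - \<eta>"
    and drift: "xs * (real \<tau> - 1) \<le> real c * \<eta> / 2"
  shows "p 0 \<le> (1 - \<eta> / (2 * xs)) ^ \<tau>"
proof -
  define \<theta> where "\<theta> = 1 - \<eta> / (2 * xs)"
  have \<theta>: "0 \<le> \<theta>" using eta by (simp add: \<theta>_def field_simps)
  have step: "p (j - 1) \<le> \<theta> * p j" if j: "1 \<le> j" "j \<le> \<tau>" for j
  proof -
    define K where "K = real c - real (j - 1)"
    have K: "0 < K" using j tau by (simp add: K_def of_nat_diff)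
    have "xs * real (j - 1) \<le> xs * (real \<tau> - 1)"
      using xs_pos j by (intro mult_left_mono) (auto simp: of_nat_diff)
    then have a: "xs * real (j - 1) \<le> real c * \<eta> / 2" using drift by linarith
    have "xs * \<theta> = xs - \<eta> / 2" using xs_pos by (simp add: \<theta>_def field_simps)
    then have "xs * \<theta> * K = (xs - \<eta> / 2) * (real c - real (j - 1))" by (simp add: K_def)
    also have "\<dots> = xs * real c - xs * real (j - 1) - \<eta> * real c / 2 + \<eta> * real (j - 1) / 2"
      by (simp add: algebra_simps)
    finally have "xs * \<theta> * K = xs * real c - xs * real (j - 1) - \<eta> * real c / 2 + \<eta> * real (j - 1) / 2" .
    moreover have "0 \<le> \<eta> * real (j - 1)" using eta by simp
    ultimately have "real c * (xs - \<eta>) \<le> xs * \<theta> * K" using a by (simp add: algebra_simps)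
    then have "p j * (real c * (xs - \<eta>)) \<le> p j * (xs * \<theta> * K)"
      using p_nonneg[of j] j tau by (intro mult_left_mono) auto
    moreover have "p j * (real c * (xs - \<eta>)) = xs * K * p (j - 1)"
      using balance[of j] below[OF j] j tau by (simp add: K_def mult_ac)
    ultimately have "(xs * K) * p (j - 1) \<le> (xs * K) * (\<theta> * p j)" by (simp add: mult_ac)
    then show ?thesis using xs_pos K by simp
  qed
  have "p 0 \<le> \<theta> ^ k * p k" if "k \<le> \<tau>" for k
    using that
  proof (induction k)
    case (Suc k)
    then have "p 0 \<le> \<theta> ^ k * p k" by simp
    also have "\<dots> \<le> \<theta> ^ k * (\<theta> * p (Suc k))"
      using step[of "Suc k"] Suc.prems \<theta> by (intro mult_left_mono) auto
    finally show ?case by (simp add: mult_ac)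
  qed simp
  also have "\<theta> ^ \<tau> * p \<tau> \<le> \<theta> ^ \<tau>"
    using p_le_one[OF tau] p_nonneg[OF tau] \<theta> by (simp add: mult_left_le)
  finally show ?thesis by (simp add: \<theta>_def)
qed

lemma deviation_lower_bound:
  assumes T: "1 \<le> T" "12 * T\<^sup>2 \<le> real c" and mean: "(\<Sum>i\<le>c. real i * p i) < T"
  shows "xs / (12 * T) \<le> (\<Sum>j=1..c. p j * \<bar>xs - x j\<bar>)"
proof -
  define u where "u = (\<Sum>i\<le>c. real i * p i)"
  define v where "v = (\<Sum>j=1..c. p j * \<bar>xs - x j\<bar>)"
  define M where "M = nat \<lceil>2 * T\<rceil>"
  have M: "2 * T \<le> real M" "real M \<le> 3 * T" "1 \<le> M" using T unfolding M_def by linarith+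
  have u0: "0 \<le> u" and v0: "0 \<le> v" using p_nonneg by (auto simp: u_def v_def intro!: sum_nonneg)
  have "u / real M \<le> u / (2 * T)" using u0 M T by (intro divide_left_mono) auto
  also have "\<dots> < 1 / 2" using mean T by (simp add: u_def field_simps)
  finally have "1 / 2 \<le> 1 - u / real M" by linarith
  then have "real c * xs * (1 / 2) \<le> real c * xs * (1 - u / real M)"
    using xs_pos by (intro mult_left_mono) auto
  then have "real c * xs / 2 \<le> real c * xs * (1 - u / real M)" by simp
  also have "\<dots> \<le> xs * real M * u + real c * real M * v"
    using mean_stock_deviation_tradeoff[OF M(3)] by (simp add: u_def v_def)
  also have "\<dots> \<le> xs * (3 * T) * T + real c * (3 * T) * v"
    using M u0 v0 mean xs_pos T by (intro add_mono mult_mono) (auto simp: u_def)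
  finally have "real c * xs / 2 \<le> xs * (3 * T) * T + real c * (3 * T) * v" .
  moreover have "xs * (3 * T) * T \<le> real c * xs / 4" using T xs_pos by (simp add: power2_eq_square field_simps)
  ultimately have "real c * xs / 4 \<le> real c * (3 * T) * v" by linarith
  moreover have "0 < real c" using T one_le_power[of T 2] by linarith
  ultimately show ?thesis using T xs_pos by (simp add: v_def field_simps)
qed

lemma loss_ge_idle_plus_curvature:
  assumes x: "policy c x" and s: "supergradient g xs s" and g0: "g 0 = 0"
    and growth: "\<forall>y\<in>{0..1}. k * \<bar>y - xs\<bar> powr \<alpha> \<le> g xs + s * (y - xs) - g y"
  shows "s / d * (\<Sum>i\<le>c. real i * p i) + lam * (k * (\<Sum>j=1..c. p j * \<bar>x j - xs\<bar> powr \<alpha>))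
    \<le> lam * g xs - (\<Sum>j=1..c. p j * lam * g (x j))"
proof -
  have lam: "0 \<le> lam" using xs_pos d_pos by (simp add: lam_eq)
  have "k * (\<Sum>j=1..c. p j * \<bar>x j - xs\<bar> powr \<alpha>) = (\<Sum>j=1..c. p j * (k * \<bar>x j - xs\<bar> powr \<alpha>))"
    by (simp add: sum_distrib_left mult_ac)
  also have "\<dots> \<le> (\<Sum>j=1..c. p j * (g xs + s * (x j - xs) - g (x j)))"
  proof (intro sum_mono mult_left_mono)
    fix j assume j: "j \<in> {1..c}"
    then show "k * \<bar>x j - xs\<bar> powr \<alpha> \<le> g xs + s * (x j - xs) - g (x j)"
      using x growth unfolding policy_def by auto
    show "0 \<le> p j" using j p_nonneg by simp
  qed
  finally have "lam * (k * (\<Sum>j=1..c. p j * \<bar>x j - xs\<bar> powr \<alpha>))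
      \<le> lam * (\<Sum>j=1..c. p j * (g xs + s * (x j - xs) - g (x j)))"
    using lam by (rule mult_left_mono)
  moreover have "0 \<le> lam * p 0 * (g xs - s * xs)"
    using lam p_nonneg[of 0] supergradient_intercept_nonneg[OF s g0] by simp
  ultimately show ?thesis using loss_decomposition[of g s] by linarith
qed

text \<open>Either the mean stock is at least T, which costs s T / d in idle units, or the
  admission probabilities deviate from xs by about 1 / T on average, which costs
  c / T^alpha = T through the curvature of g.\<close>
lemma loss_lower_bound:
  assumes x: "policy c x" and s: "0 < s" "supergradient g xs s" and g0: "g 0 = 0"
    and growth: "\<forall>y\<in>{0..1}. k * \<bar>y - xs\<bar> powr \<alpha> \<le> g xs + s * (y - xs) - g y"
    and k: "0 < k" and \<alpha>: "1 \<le> \<alpha>"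
    and T: "1 \<le> T" "real c = T powr (\<alpha> + 1)" "12 * T\<^sup>2 \<le> real c"
  shows "min (s / d) (k * (xs / 24) powr \<alpha> / (xs * d)) * T
    \<le> lam * g xs - (\<Sum>j=1..c. p j * lam * g (x j))"
proof -
  define u where "u = (\<Sum>i\<le>c. real i * p i)"
  define H where "H = (\<Sum>j=1..c. p j * \<bar>x j - xs\<bar> powr \<alpha>)"
  have lam: "0 \<le> lam" using xs_pos d_pos by (simp add: lam_eq)
  have u: "0 \<le> u" and H: "0 \<le> H" using p_nonneg by (auto simp: u_def H_def intro!: sum_nonneg)
  note loss = loss_ge_idle_plus_curvature[OF x s(2) g0 growth, folded u_def H_def]
  have idle: "0 \<le> s / d * u" and curvature: "0 \<le> lam * (k * H)" using s d_pos u lam k H by simp_all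
  show ?thesis
  proof (cases "T \<le> u")
    case True
    have "min (s / d) (k * (xs / 24) powr \<alpha> / (xs * d)) * T \<le> s / d * T"
      using T by (intro mult_right_mono) auto
    also have "\<dots> \<le> s / d * u" using True s d_pos by (intro mult_left_mono) auto
    finally show ?thesis using loss curvature by linarith
  next
    case False
    have "2 * (xs / 24 / T) \<le> (\<Sum>j=1..c. p j * \<bar>x j - xs\<bar>)"
      using deviation_lower_bound[OF T(1,3)] False by (simp add: u_def abs_minus_commute)
    moreover have "(\<Sum>j=1..c. p j) \<le> 1" using sum_p_atLeast1 p_nonneg[of 0] by simp
    ultimately have "(xs / 24 / T) powr \<alpha> \<le> H"
      unfolding H_def using p_nonneg xs_pos T \<alpha> by (intro weighted_powr_lower_bound) auto
    then have "k * (lam * (xs / 24 / T) powr \<alpha>) \<le> lam * (k * H)"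
      using lam k by (simp add: mult_left_mono mult.left_commute)
    also have "lam * (xs / 24 / T) powr \<alpha> = (xs / 24) powr \<alpha> / (xs * d) * T"
      using T by (intro scaled_rate_mult_powr[OF lam_eq xs_pos d_pos]) auto
    finally have "k * (xs / 24) powr \<alpha> / (xs * d) * T \<le> lam * (k * H)" by simp
    moreover have "min (s / d) (k * (xs / 24) powr \<alpha> / (xs * d)) * T \<le> k * (xs / 24) powr \<alpha> / (xs * d) * T"
      using T by (intro mult_right_mono) auto
    ultimately show ?thesis using loss idle by linarith
  qed
qed

text \<open>The two-price policy with prices xs -+ eta and threshold tau: below tau the stock is
  refilled fast enough to make stock-outs rare, above it the stock drifts back to tau.\<close>
lemma two_price_loss_le:
  assumes x: "x = two_price \<tau> (xs - \<eta>) (xs + \<eta>)"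
    and eta: "0 < \<eta>" "\<eta> < xs" and tau: "\<tau> \<le> c" and drift: "xs * (real \<tau> - 1) \<le> real c * \<eta> / 2"
    and s: "0 \<le> s" "supergradient g xs s" and g0: "g 0 = 0"
    and curvature: "\<And>j. j \<in> {1..c} \<Longrightarrow> g xs + s * (x j - xs) - g (x j) \<le> C" and C: "0 \<le> C"
  shows "lam * g xs - (\<Sum>j=1..c. p j * lam * g (x j))
     \<le> lam * (1 - \<eta> / (2 * xs)) ^ \<tau> * (g xs - s * xs) + s / d * (real \<tau> + xs / \<eta>) + lam * C"
proof -
  have lam: "0 \<le> lam" using xs_pos d_pos by (simp add: lam_eq)
  have "p 0 \<le> (1 - \<eta> / (2 * xs)) ^ \<tau>"
    using eta tau drift by (intro empty_probability_le_power) (auto simp: x two_price_def)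
  then have "lam * p 0 * (g xs - s * xs) \<le> lam * (1 - \<eta> / (2 * xs)) ^ \<tau> * (g xs - s * xs)"
    using lam supergradient_intercept_nonneg[OF s(2) g0] by (intro mult_right_mono mult_left_mono) auto
  moreover have "s / d * (\<Sum>i\<le>c. real i * p i) \<le> s / d * (real \<tau> + xs / \<eta>)"
    using mean_stock_le_threshold[OF eta(1), of \<tau>] s(1) d_pos
    by (intro mult_left_mono) (auto simp: x two_price_def)
  moreover have "(\<Sum>j=1..c. p j * (g xs + s * (x j - xs) - g (x j))) \<le> C"
  proof -
    have "(\<Sum>j=1..c. p j * (g xs + s * (x j - xs) - g (x j))) \<le> (\<Sum>j=1..c. p j * C)"
      using curvature p_nonneg by (intro sum_mono mult_left_mono) auto
    also have "\<dots> = (1 - p 0) * C" using sum_p_atLeast1 by (simp flip: sum_distrib_right)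
    also have "\<dots> \<le> C" using p_nonneg[of 0] C by (simp add: algebra_simps)
    finally show ?thesis .
  qed
  then have "lam * (\<Sum>j=1..c. p j * (g xs + s * (x j - xs) - g (x j))) \<le> lam * C"
    using lam by (rule mult_left_mono)
  ultimately show ?thesis using loss_decomposition[of g s] by linarith
qed

end

section \<open>The two-price upper bound\<close>

lemma stockout_power_le_inverse:
  assumes xs: "0 < xs" and T: "1 \<le> T" "1 \<le> 2 * xs * T" and c: "0 < c"
    and tau: "2 * xs * T * ln c \<le> real \<tau>"
  shows "(1 - 1 / (2 * xs * T)) ^ \<tau> \<le> 1 / c"
proof -
  have "(1 - 1 / (2 * xs * T)) ^ \<tau> \<le> exp (- (1 / (2 * xs * T) * real \<tau>))"
    using T xs by (intro one_minus_power_le_exp) (simp add: field_simps)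
  also have "\<dots> \<le> exp (- ln c)"
    using tau xs T by (simp add: field_simps)
  also have "\<dots> = 1 / c" using c by (simp add: exp_minus inverse_eq_divide)
  finally show ?thesis .
qed

lemma le_scaled_log_square:
  fixes A B \<sigma> xs T L :: real
  assumes "0 \<le> A" "0 \<le> B" "0 \<le> \<sigma>" "0 < xs" "1 \<le> T" "1 \<le> L"
  shows "A + \<sigma> * (2 * xs * T * L + 1 + xs * T) + B * T \<le> (A + \<sigma> * (3 * xs + 1) + B) * (T * L\<^sup>2)"
proof -
  define Q where "Q = T * L\<^sup>2"
  have "T * L \<le> Q" using assms by (simp add: Q_def power2_eq_square)
  moreover have "T \<le> T * L" using assms by simp
  ultimately have Q: "T * L \<le> Q" "T \<le> Q" "1 \<le> Q" using assms by linarith+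
  have "\<sigma> * (2 * xs * T * L + 1 + xs * T) \<le> \<sigma> * (2 * xs * Q + Q + xs * Q)"
    using assms Q by (intro mult_left_mono add_mono) (auto simp: mult.assoc)
  moreover have "A * 1 \<le> A * Q" using assms Q by (intro mult_left_mono) auto
  moreover have "B * T \<le> B * Q" using assms Q by (intro mult_left_mono) auto
  ultimately show ?thesis by (simp add: Q_def[symmetric] algebra_simps)
qed

lemma two_price_loss_terms_le:
  assumes lam: "lam = real c / (xs * d)" and xs: "0 < xs" and d: "0 < d" and c: "3 \<le> c"
    and G: "0 \<le> G" and s: "0 \<le> s" and k1: "0 \<le> k1"
    and T: "1 \<le> T" "real c = T powr (\<alpha> + 1)" "1 / T < xs"
    and tau: "2 * xs * T * ln (real c) \<le> real \<tau>" "real \<tau> \<le> 2 * xs * T * ln (real c) + 1"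
  shows "lam * (1 - 1 / (2 * xs * T)) ^ \<tau> * G + s / d * (real \<tau> + xs * T) + lam * (k1 * (1 / T) powr \<alpha>)
    \<le> (G / (xs * d) + s / d * (3 * xs + 1) + k1 / (xs * d)) * (T * (ln (real c))\<^sup>2)"
proof -
  have lnc: "1 \<le> ln (real c)" using c exp_le by (simp add: ln_ge_iff)
  have "1 \<le> 2 * xs * T" using T(1,3) by (simp add: field_simps)
  then have "(1 - 1 / (2 * xs * T)) ^ \<tau> \<le> 1 / real c"
    using c by (intro stockout_power_le_inverse[OF xs T(1) _ _ tau(1)]) auto
  then have "lam * (1 - 1 / (2 * xs * T)) ^ \<tau> \<le> 1 / (xs * d)"
    using c xs d mult_left_mono[of _ "1 / real c" lam] by (simp add: lam)
  then have "lam * (1 - 1 / (2 * xs * T)) ^ \<tau> * G \<le> G / (xs * d)"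
    using mult_right_mono[OF _ G] by fastforce
  moreover have "s / d * (real \<tau> + xs * T) \<le> s / d * (2 * xs * T * ln (real c) + 1 + xs * T)"
    using tau s d by (intro mult_left_mono) auto
  moreover have "lam * (k1 * (1 / T) powr \<alpha>) = k1 / (xs * d) * T"
    using scaled_rate_mult_powr[OF lam xs d _ T(2), of 1] T by (simp add: mult.left_commute[of lam])
  moreover have "G / (xs * d) + s / d * (2 * xs * T * ln (real c) + 1 + xs * T) + k1 / (xs * d) * T
      \<le> (G / (xs * d) + s / d * (3 * xs + 1) + k1 / (xs * d)) * (T * (ln (real c))\<^sup>2)"
    using G xs d s k1 T lnc by (intro le_scaled_log_square) auto
  ultimately show ?thesis by linarith
qed

lemma two_price_loss_upper_bound:
  fixes g :: "real \<Rightarrow> real" and c :: nat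
  assumes lam: "lam = real c / (xs * d)" and xs: "0 < xs" and d: "0 < d" and c: "3 \<le> c"
    and s: "0 \<le> s" "supergradient g xs s" and g0: "g 0 = 0"
    and eps: "0 < \<epsilon>" "\<epsilon> < min xs (1 - xs)" and k1: "0 \<le> k1"
    and local: "\<forall>y\<in>{xs - \<epsilon>..xs + \<epsilon>}. g xs + s * (y - xs) - k1 * \<bar>y - xs\<bar> powr \<alpha> \<le> g y"
    and T: "1 \<le> T" "real c = T powr (\<alpha> + 1)" "1 / T \<le> \<epsilon>"
      "4 * xs\<^sup>2 * T\<^sup>2 * ln (real c) \<le> real c" "2 * xs * T * ln (real c) + 1 \<le> real c"
  shows "\<exists>x. policy c x \<and> two_price_policy c x \<and>
     lam * g xs - avg_reward c lam d g x
       \<le> ((g xs - s * xs) / (xs * d) + s / d * (3 * xs + 1) + k1 / (xs * d)) * (T * (ln (real c))\<^sup>2)"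
proof -
  define \<eta> where "\<eta> = 1 / T"
  define \<tau> where "\<tau> = nat \<lceil>2 * xs * T * ln (real c)\<rceil>"
  define x where "x = two_price \<tau> (xs - \<eta>) (xs + \<eta>)"
  have lnc: "1 \<le> ln (real c)" using c exp_le by (simp add: ln_ge_iff)
  have eta: "0 < \<eta>" "\<eta> \<le> \<epsilon>" "\<eta> < xs" "xs + \<eta> < 1" using T eps by (auto simp: \<eta>_def)
  have tau: "2 * xs * T * ln (real c) \<le> real \<tau>" "real \<tau> \<le> 2 * xs * T * ln (real c) + 1"
    using xs T lnc by (simp_all add: \<tau>_def)
  moreover have "0 < 2 * xs * T * ln (real c)" using xs T lnc by simp
  ultimately have "0 < real \<tau>" "real \<tau> \<le> real c" using T(5) by linarith+
  then have tau_c: "\<tau> \<in> {1..c}" by simp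
  have pol: "policy c x" "two_price_policy c x"
    using eta tau_c unfolding x_def by (auto intro!: policy_two_price two_price_policy_two_price)
  have lam0: "0 < lam" using c xs d by (simp add: lam)
  interpret scaled_steady_state c lam d xs x "steady_state c lam d x"
    using is_steady_state_steady_state[OF lam0 d pol(1)] lam xs d by unfold_locales
  have "xs * (real \<tau> - 1) \<le> xs * (2 * xs * T * ln (real c))"
    using tau(2) xs by (intro mult_left_mono) auto
  also have "\<dots> = (4 * xs\<^sup>2 * T\<^sup>2 * ln (real c)) * \<eta> / 2"
    using T(1) by (simp add: \<eta>_def power2_eq_square field_simps)
  also have "\<dots> \<le> real c * \<eta> / 2" using T(4) eta by (intro divide_right_mono mult_right_mono) auto
  finally have drift: "xs * (real \<tau> - 1) \<le> real c * \<eta> / 2" .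
  have "g xs + s * (y - xs) - g y \<le> k1 * \<eta> powr \<alpha>" if "\<bar>y - xs\<bar> = \<eta>" for y
  proof -
    have "y \<in> {xs - \<epsilon>..xs + \<epsilon>}" using that eta by (auto simp: abs_eq_iff)
    then show ?thesis using local that by fastforce
  qed
  then have curvature: "g xs + s * (x j - xs) - g (x j) \<le> k1 * \<eta> powr \<alpha>" if "j \<in> {1..c}" for j
    using eta by (simp add: x_def two_price_def)
  have "lam * g xs - avg_reward c lam d g x \<le>
      lam * (1 - \<eta> / (2 * xs)) ^ \<tau> * (g xs - s * xs) + s / d * (real \<tau> + xs / \<eta>) + lam * (k1 * \<eta> powr \<alpha>)"
    unfolding avg_reward_def
    by (rule two_price_loss_le[OF x_def eta(1,3) _ drift s g0 curvature]) (use tau_c k1 in auto)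
  also have "\<dots> \<le> ((g xs - s * xs) / (xs * d) + s / d * (3 * xs + 1) + k1 / (xs * d)) * (T * (ln (real c))\<^sup>2)"
    using two_price_loss_terms_le[OF lam xs d c supergradient_intercept_nonneg[OF s(2) g0] s(1) k1 T(1,2) _ tau] eta
    by (simp add: \<eta>_def mult.commute)
  finally show ?thesis using pol by blast
qed

section \<open>The asymptotic regime\<close>

lemma eventually_asymptotic_regime:
  fixes \<alpha> \<epsilon> xs :: real
  assumes \<alpha>: "1 < \<alpha>" and eps: "0 < \<epsilon>"
  shows "\<forall>\<^sub>F c in sequentially. 3 \<le> c \<and>
     1 / real c powr (1 / (\<alpha> + 1)) \<le> \<epsilon> \<and>
     12 * (real c powr (1 / (\<alpha> + 1)))\<^sup>2 \<le> real c \<and>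
     4 * xs\<^sup>2 * (real c powr (1 / (\<alpha> + 1)))\<^sup>2 * ln (real c) \<le> real c \<and>
     2 * xs * real c powr (1 / (\<alpha> + 1)) * ln (real c) + 1 \<le> real c"
proof -
  have "\<forall>\<^sub>F y in at_top. 3 \<le> y \<and>
      1 / y powr (1 / (\<alpha> + 1)) \<le> \<epsilon> \<and>
      12 * (y powr (1 / (\<alpha> + 1)))\<^sup>2 \<le> y \<and>
      4 * xs\<^sup>2 * (y powr (1 / (\<alpha> + 1)))\<^sup>2 * ln y \<le> y \<and>
      2 * xs * y powr (1 / (\<alpha> + 1)) * ln y + 1 \<le> y"
    using \<alpha> eps by (intro eventually_conj; real_asymp)
  from eventually_compose_filterlim[OF this filterlim_real_sequentially]
  show ?thesis by (rule eventually_mono) simp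
qed

lemma SUP_policy_le:
  assumes "\<And>x. policy c x \<Longrightarrow> avg_reward c lam d g x \<le> B"
  shows "(SUP x\<in>{x. policy c x}. avg_reward c lam d g x) \<le> B"
proof -
  have "policy c (\<lambda>_. 0)" by (simp add: policy_def)
  then show ?thesis using assms by (intro cSUP_least) auto
qed

lemma le_SUP_policy:
  assumes "\<And>x. policy c x \<Longrightarrow> avg_reward c lam d g x \<le> B" and "policy c y"
  shows "avg_reward c lam d g y \<le> (SUP x\<in>{x. policy c x}. avg_reward c lam d g x)"
  using assms by (intro cSUP_upper bdd_aboveI2[of _ _ B]) auto

lemma optimal_loss_bounds:
  fixes g :: "real \<Rightarrow> real" and c :: nat
  assumes xs: "0 < xs" "xs < 1" and d: "0 < d" and g0: "g 0 = 0" and \<alpha>: "1 < \<alpha>"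
    and s: "0 < s" "supergradient g xs s" and eps: "0 < \<epsilon>" "\<epsilon> < min xs (1 - xs)" and k1: "0 \<le> k1"
    and lower: "\<forall>y\<in>{xs - \<epsilon>..xs + \<epsilon>}. g xs + s * (y - xs) - k1 * \<bar>y - xs\<bar> powr \<alpha> \<le> g y"
    and k: "0 < k" and growth: "\<forall>y\<in>{0..1}. k * \<bar>y - xs\<bar> powr \<alpha> \<le> g xs + s * (y - xs) - g y"
    and c: "3 \<le> c" "1 / real c powr (1 / (\<alpha> + 1)) \<le> \<epsilon>"
      "12 * (real c powr (1 / (\<alpha> + 1)))\<^sup>2 \<le> real c"
      "4 * xs\<^sup>2 * (real c powr (1 / (\<alpha> + 1)))\<^sup>2 * ln (real c) \<le> real c"
      "2 * xs * real c powr (1 / (\<alpha> + 1)) * ln (real c) + 1 \<le> real c"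
    and K1: "K1 \<le> min (s / d) (k * (xs / 24) powr \<alpha> / (xs * d))"
    and K2: "(g xs - s * xs) / (xs * d) + s / d * (3 * xs + 1) + k1 / (xs * d) \<le> K2"
  shows "let lam = real c / (xs * d) in
     \<exists>xTP. policy c xTP \<and> two_price_policy c xTP \<and>
       K1 * real c powr (1 / (\<alpha> + 1))
         \<le> lam * g xs - (SUP x\<in>{x. policy c x}. avg_reward c lam d g x) \<and>
       lam * g xs - (SUP x\<in>{x. policy c x}. avg_reward c lam d g x)
         \<le> lam * g xs - avg_reward c lam d g xTP \<and>
       lam * g xs - avg_reward c lam d g xTP
         \<le> K2 * real c powr (1 / (\<alpha> + 1)) * (ln (real c))\<^sup>2"
proof -
  define T where "T = real c powr (1 / (\<alpha> + 1))"
  define lam where "lam = real c / (xs * d)"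
  define R where "R = (SUP x\<in>{x. policy c x}. avg_reward c lam d g x)"
  have T: "1 \<le> T" "real c = T powr (\<alpha> + 1)"
    using c(1) \<alpha> by (simp_all add: T_def ge_one_powr_ge_zero powr_powr)
  have lam0: "0 < lam" using c xs d by (simp add: lam_def)
  have lower_bound: "avg_reward c lam d g x \<le> lam * g xs - K1 * T" if x: "policy c x" for x
  proof -
    interpret scaled_steady_state c lam d xs x "steady_state c lam d x"
      using is_steady_state_steady_state[OF lam0 d x] lam_def xs d by unfold_locales
    have "min (s / d) (k * (xs / 24) powr \<alpha> / (xs * d)) * T \<le> lam * g xs - avg_reward c lam d g x"
      using loss_lower_bound[OF x s g0 growth k _ T] \<alpha> c(3) by (simp add: avg_reward_def T_def)
    moreover have "K1 * T \<le> min (s / d) (k * (xs / 24) powr \<alpha> / (xs * d)) * T"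
      using K1 T by (intro mult_right_mono) auto
    ultimately show ?thesis by linarith
  qed
  obtain xTP where xTP: "policy c xTP" "two_price_policy c xTP"
    "lam * g xs - avg_reward c lam d g xTP
       \<le> ((g xs - s * xs) / (xs * d) + s / d * (3 * xs + 1) + k1 / (xs * d)) * (T * (ln (real c))\<^sup>2)"
    using two_price_loss_upper_bound[OF lam_def xs(1) d c(1) _ s(2) g0 eps k1 lower T] s c
    by (auto simp: T_def)
  moreover have "\<dots> \<le> K2 * (T * (ln (real c))\<^sup>2)" using K2 T by (intro mult_right_mono) auto
  moreover have "R \<le> lam * g xs - K1 * T"
    unfolding R_def by (rule SUP_policy_le, rule lower_bound)
  moreover have "avg_reward c lam d g xTP \<le> R"
    unfolding R_def by (rule le_SUP_policy[OF lower_bound xTP(1)])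
  ultimately show ?thesis
    unfolding Let_def lam_def[symmetric] R_def[symmetric] T_def[symmetric] by (auto simp: mult.assoc)
qed

theorem corollary1:
  fixes g :: "real \<Rightarrow> real" and xs d \<alpha> :: real
  assumes "0 < xs" "xs < 1" "0 < d"
    and "concave_on {0..1} g" "mono_on {0..1} g" "g 0 = 0"
    and "1 < \<alpha>"
    and "\<exists>s. 0 < s \<and> assumption1 g xs \<alpha> s"
    and "\<exists>s. assumption2 g xs \<alpha> s"
  shows "\<exists>K1 K2 (c0::nat). 0 < K1 \<and> K1 \<le> K2 \<and>
     (\<forall>c\<ge>c0. let lam = real c / (xs * d) in
        \<exists>xTP. policy c xTP \<and> two_price_policy c xTP \<and>
          K1 * real c powr (1 / (\<alpha> + 1))
            \<le> lam * g xs - (SUP x\<in>{x. policy c x}. avg_reward c lam d g x) \<and>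
          lam * g xs - (SUP x\<in>{x. policy c x}. avg_reward c lam d g x)
            \<le> lam * g xs - avg_reward c lam d g xTP \<and>
          lam * g xs - avg_reward c lam d g xTP
            \<le> K2 * real c powr (1 / (\<alpha> + 1)) * (ln (real c))\<^sup>2)"
proof -
  obtain s \<epsilon> k1 k where regularity: "0 < s" "supergradient g xs s" "0 < \<epsilon>" "\<epsilon> < min xs (1 - xs)"
    "0 \<le> k1" "\<forall>y\<in>{xs - \<epsilon>..xs + \<epsilon>}. g xs + s * (y - xs) - k1 * \<bar>y - xs\<bar> powr \<alpha> \<le> g y"
    "0 < k" "\<forall>y\<in>{0..1}. k * \<bar>y - xs\<bar> powr \<alpha> \<le> g xs + s * (y - xs) - g y"
    using reward_regularity[OF assms(4,7-9)] by blast
  obtain c0 where c0: "\<And>c. c0 \<le> c \<Longrightarrow> 3 \<le> c \<and>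
     1 / real c powr (1 / (\<alpha> + 1)) \<le> \<epsilon> \<and> 12 * (real c powr (1 / (\<alpha> + 1)))\<^sup>2 \<le> real c \<and>
     4 * xs\<^sup>2 * (real c powr (1 / (\<alpha> + 1)))\<^sup>2 * ln (real c) \<le> real c \<and>
     2 * xs * real c powr (1 / (\<alpha> + 1)) * ln (real c) + 1 \<le> real c"
    using eventually_asymptotic_regime[OF assms(7) regularity(3), of xs] unfolding eventually_sequentially by blast
  define K1 where "K1 = min (s / d) (k * (xs / 24) powr \<alpha> / (xs * d))"
  define K2 where "K2 = max K1 ((g xs - s * xs) / (xs * d) + s / d * (3 * xs + 1) + k1 / (xs * d))"
  show ?thesis
  proof (rule exI[of _ K1], rule exI[of _ K2], rule exI[of _ c0], intro conjI allI impI)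
    show "0 < K1" using regularity assms(1,3) by (simp add: K1_def)
    show "K1 \<le> K2" by (simp add: K2_def)
  qed (rule optimal_loss_bounds[OF assms(1-3,6-7) regularity]; use c0 in \<open>auto simp: K1_def K2_def\<close>)
qed

end
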